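(* Let $K\ge 2$ and let $r\in[0,1]^K$ satisfy $r(1)>r(2)>\cdots>r(K)$. Fix a sub-optimal arm $j\in\{2,\ldots,K\}$ and a temperature $\eta>0$. For a policy $\pi=\pi_\theta$ write $\varepsilon:=1-\pi(j)$ and $p_a:=\pi(a)$. There exists $\varepsilon_0(\eta)>0$ such that for all $\varepsilon\in(0,\varepsilon_0(\eta))$: if $p_1\ge\varepsilon/K$, then under the Delightful Policy Gradient (DG) flow at temperature $\eta$, \[ \dot\theta(1)-\dot\theta(j)\;\ge\;\frac{\Delta_{1j}}{8K}\,\varepsilon . \]
   Context: $K$-armed bandit: the policy is parameterized by logits $\theta\in\mathbb{R}^K$ via the softmax $\pi_\theta(a)=e^{\theta(a)}/\sum_{a'}e^{\theta(a')}$. The advantage is $U(a):=r(a)-\pi_\theta^\top r$, the surprisal is $\ell(a):=-\log\pi(a)$, and $\Delta_{ab}:=r(a)-r(b)$. With $\sigma(x)=1/(1+e^{-x})$, the DG gate is $w(a):=\sigma(U(a)\ell(a)/\eta)$ and the DG flow is $\dot\theta(a)=\sum_{a'=1}^K w(a')\,\pi(a')\,U(a')\,(\mathbf{1}\{a=a'\}-\pi(a))$. *)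

theory Defs
  imports Complex_Main
begin

text \<open>K-armed bandit with arms 1..K; logits theta :: nat => real (only values on 1..K matter).\<close>

definition softmax :: "nat \<Rightarrow> (nat \<Rightarrow> real) \<Rightarrow> nat \<Rightarrow> real" where
  "softmax K \<theta> a = exp (\<theta> a) / (\<Sum>a'\<in>{1..K}. exp (\<theta> a'))"

definition advantage :: "nat \<Rightarrow> (nat \<Rightarrow> real) \<Rightarrow> (nat \<Rightarrow> real) \<Rightarrow> nat \<Rightarrow> real" where
  "advantage K r \<theta> a = r a - (\<Sum>a'\<in>{1..K}. softmax K \<theta> a' * r a')"

definition surprisal :: "nat \<Rightarrow> (nat \<Rightarrow> real) \<Rightarrow> nat \<Rightarrow> real" where
  "surprisal K \<theta> a = - ln (softmax K \<theta> a)"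

definition sigmoid :: "real \<Rightarrow> real" where
  "sigmoid x = 1 / (1 + exp (- x))"

definition dg_gate :: "nat \<Rightarrow> (nat \<Rightarrow> real) \<Rightarrow> real \<Rightarrow> (nat \<Rightarrow> real) \<Rightarrow> nat \<Rightarrow> real" where
  "dg_gate K r \<eta> \<theta> a = sigmoid (advantage K r \<theta> a * surprisal K \<theta> a / \<eta>)"

definition dg_flow :: "nat \<Rightarrow> (nat \<Rightarrow> real) \<Rightarrow> real \<Rightarrow> (nat \<Rightarrow> real) \<Rightarrow> nat \<Rightarrow> real" where
  "dg_flow K r \<eta> \<theta> a =
     (\<Sum>a'\<in>{1..K}. dg_gate K r \<eta> \<theta> a' * softmax K \<theta> a' * advantage K r \<theta> a'
        * ((if a = a' then 1 else 0) - softmax K \<theta> a))"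

end

(*
  Write w, p, U for gate, policy and advantage, and S for the sum of w a * p a * U a over all arms.
  The flow is w b * p b * U b - p b * S, so theta'(1) - theta'(j) splits into a contribution of
  arm 1, one of arm j, and (p j - p 1) times the sum over the remaining arms. With
  eps = 1 - p j and B = (r 1 - r j) eps / (8 K), the three parts are at least 3B, -B and -B.
  For small eps the baseline is within eps of r j, so U 1 is close to r 1 - r j, U j is O(eps)
  and the gate of arm 1 is at least 1/2: arm 1 contributes at least 3/8 (r 1 - r j) p 1 >= 3B,
  while arm j contributes O(eps^2). A remaining arm with negative advantage is worse than j by a
  fixed gap delta, so its advantage is at most -delta/2 while its surprisal is at least -ln eps;
  its gate is then at most eps powr (delta / (2 eta)), which is below (r 1 - r j) / (8 K).
*)
theory Submission
  imports Defs
begin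

definition dg_weighted_advantage ::
    "nat \<Rightarrow> (nat \<Rightarrow> real) \<Rightarrow> real \<Rightarrow> (nat \<Rightarrow> real) \<Rightarrow> nat \<Rightarrow> real" where
  "dg_weighted_advantage K r \<eta> \<theta> a = dg_gate K r \<eta> \<theta> a * softmax K \<theta> a * advantage K r \<theta> a"

lemma sigmoid_pos: "0 < sigmoid x"
  unfolding sigmoid_def by (simp add: add_pos_pos)

lemma sigmoid_le_one: "sigmoid x \<le> 1"
  unfolding sigmoid_def by (simp add: add_pos_pos)

lemma sigmoid_ge_half:
  assumes "0 \<le> x"
  shows "1/2 \<le> sigmoid x"
proof -
  have "exp (- x) \<le> 1" using assms by simp
  then have "1/2 \<le> 1 / (1 + exp (- x))"
    by (intro divide_left_mono) (auto simp: add_pos_pos)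
  then show ?thesis unfolding sigmoid_def .
qed

lemma sigmoid_le_exp: "sigmoid x \<le> exp x"
proof -
  have "1 / (1 + exp (- x)) \<le> 1 / exp (- x)"
    by (rule divide_left_mono) (auto simp: add_pos_pos)
  also have "1 / exp (- x) = exp x" by (simp add: exp_minus divide_inverse)
  finally show ?thesis unfolding sigmoid_def .
qed

lemma softmax_pos: "1 \<le> K \<Longrightarrow> 0 < softmax K \<theta> a"
  unfolding softmax_def by (intro divide_pos_pos) (auto intro!: sum_pos)

lemma sum_softmax:
  assumes "1 \<le> K"
  shows "(\<Sum>a\<in>{1..K}. softmax K \<theta> a) = 1"
proof -
  have "0 < (\<Sum>a\<in>{1..K}. exp (\<theta> a))" using assms by (auto intro!: sum_pos)
  then show ?thesis unfolding softmax_def by (simp flip: sum_divide_distrib)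
qed

lemma sum_softmax_remove:
  assumes "j \<in> {1..K}"
  shows "(\<Sum>a\<in>{1..K} - {j}. softmax K \<theta> a) = 1 - softmax K \<theta> j"
  using sum.remove[OF _ assms, of "softmax K \<theta>"] sum_softmax[of K \<theta>] assms by simp

lemma softmax_le_one_minus:
  assumes "a \<in> {1..K}" "j \<in> {1..K}" "a \<noteq> j"
  shows "softmax K \<theta> a \<le> 1 - softmax K \<theta> j"
proof -
  have "1 \<le> K" using assms by simp
  then show ?thesis
    using member_le_sum[of a "{1..K} - {j}" "softmax K \<theta>"] sum_softmax_remove[OF assms(2), of \<theta>] assms
    by (simp add: less_imp_le softmax_pos)
qed

lemma softmax_le_one:
  assumes "a \<in> {1..K}"
  shows "softmax K \<theta> a \<le> 1"
  using member_le_sum[of a "{1..K}" "softmax K \<theta>"] sum_softmax[of K \<theta>] assms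
  by (simp add: less_imp_le softmax_pos)

lemma surprisal_nonneg: "a \<in> {1..K} \<Longrightarrow> 0 \<le> surprisal K \<theta> a"
  unfolding surprisal_def by (simp add: softmax_le_one softmax_pos)

lemma advantage_diff: "advantage K r \<theta> a - advantage K r \<theta> b = r a - r b"
  by (simp add: advantage_def)

lemma abs_advantage_le:
  assumes rewards: "\<forall>a\<in>{1..K}. 0 \<le> r a \<and> r a \<le> 1" and j: "j \<in> {1..K}"
  shows "\<bar>advantage K r \<theta> j\<bar> \<le> 1 - softmax K \<theta> j"
proof -
  let ?p = "softmax K \<theta>"
  have K: "1 \<le> K" using j by simp
  have "advantage K r \<theta> j = (\<Sum>a\<in>{1..K}. ?p a * (r j - r a))"
    unfolding advantage_def using sum_softmax[OF K, of \<theta>]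
    by (simp add: right_diff_distrib sum_subtractf flip: sum_distrib_right)
  also have "\<dots> = (\<Sum>a\<in>{1..K} - {j}. ?p a * (r j - r a))"
    using sum.remove[OF _ j, of "\<lambda>a. ?p a * (r j - r a)"] by simp
  finally have "\<bar>advantage K r \<theta> j\<bar> \<le> (\<Sum>a\<in>{1..K} - {j}. \<bar>?p a * (r j - r a)\<bar>)"
    by (simp add: sum_abs)
  also have "\<dots> \<le> (\<Sum>a\<in>{1..K} - {j}. ?p a)"
  proof (rule sum_mono)
    fix a assume "a \<in> {1..K} - {j}"
    then have "r a \<in> {0..1}" "r j \<in> {0..1}" using rewards j by auto
    then have "\<bar>r j - r a\<bar> \<le> 1" by (auto simp: abs_le_iff)
    then show "\<bar>?p a * (r j - r a)\<bar> \<le> ?p a"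
      using softmax_pos[OF K, of \<theta> a] by (simp add: abs_mult mult_left_le)
  qed
  finally show ?thesis using sum_softmax_remove[OF j, of \<theta>] by simp
qed

lemma advantage_ge_minus_one:
  assumes rewards: "\<forall>a\<in>{1..K}. 0 \<le> r a \<and> r a \<le> 1" and a: "a \<in> {1..K}"
  shows "-1 \<le> advantage K r \<theta> a"
proof -
  have "(\<Sum>b\<in>{1..K}. softmax K \<theta> b * r b) \<le> (\<Sum>b\<in>{1..K}. softmax K \<theta> b)"
    using rewards a by (intro sum_mono) (simp add: mult_left_le less_imp_le softmax_pos)
  moreover have "0 \<le> r a" using rewards a by blast
  ultimately show ?thesis using a sum_softmax[of K \<theta>] by (simp add: advantage_def)
qed

lemma dg_gate_ge_half:
  assumes "0 < \<eta>" "a \<in> {1..K}" "0 \<le> advantage K r \<theta> a"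
  shows "1/2 \<le> dg_gate K r \<eta> \<theta> a"
  unfolding dg_gate_def using assms surprisal_nonneg[of a K \<theta>]
  by (intro sigmoid_ge_half) simp

lemma dg_gate_le_powr:
  assumes \<eta>: "0 < \<eta>" and a: "a \<in> {1..K}" and "0 \<le> \<gamma>"
    and adv: "advantage K r \<theta> a \<le> - \<gamma>" and p: "softmax K \<theta> a \<le> \<epsilon>"
  shows "dg_gate K r \<eta> \<theta> a \<le> \<epsilon> powr (\<gamma> / \<eta>)"
proof -
  have p_pos: "0 < softmax K \<theta> a" using a by (simp add: softmax_pos)
  then have "- ln \<epsilon> \<le> surprisal K \<theta> a"
    unfolding surprisal_def using p by simp
  have "advantage K r \<theta> a * surprisal K \<theta> a \<le> - \<gamma> * surprisal K \<theta> a"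
    using adv surprisal_nonneg[OF a] by (rule mult_right_mono)
  also have "\<dots> \<le> \<gamma> * ln \<epsilon>"
    using mult_left_mono[OF \<open>- ln \<epsilon> \<le> surprisal K \<theta> a\<close> \<open>0 \<le> \<gamma>\<close>] by simp
  finally have "advantage K r \<theta> a * surprisal K \<theta> a / \<eta> \<le> \<gamma> / \<eta> * ln \<epsilon>"
    using \<eta> by (simp add: divide_right_mono)
  then have "dg_gate K r \<eta> \<theta> a \<le> exp (\<gamma> / \<eta> * ln \<epsilon>)"
    unfolding dg_gate_def by (meson exp_le_cancel_iff order_trans sigmoid_le_exp)
  then show ?thesis using p_pos p by (simp add: powr_def)
qed

lemma dg_flow_eq:
  assumes "b \<in> {1..K}"
  shows "dg_flow K r \<eta> \<theta> b = dg_weighted_advantage K r \<eta> \<theta> b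
           - softmax K \<theta> b * (\<Sum>a\<in>{1..K}. dg_weighted_advantage K r \<eta> \<theta> a)"
proof -
  let ?W = "dg_weighted_advantage K r \<eta> \<theta>"
  have "dg_flow K r \<eta> \<theta> b = (\<Sum>a\<in>{1..K}. (if b = a then ?W a else 0) - ?W a * softmax K \<theta> b)"
    unfolding dg_flow_def dg_weighted_advantage_def by (intro sum.cong) (auto simp: algebra_simps)
  also have "\<dots> = ?W b - softmax K \<theta> b * (\<Sum>a\<in>{1..K}. ?W a)"
    using assms by (simp add: sum_subtractf sum_distrib_left mult.commute)
  finally show ?thesis .
qed

lemma dg_flow_diff_eq:
  fixes r \<theta> :: "nat \<Rightarrow> real" and \<eta> :: real
  assumes "a \<in> {1..K}" "b \<in> {1..K}" "a \<noteq> b"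
  defines "W \<equiv> dg_weighted_advantage K r \<eta> \<theta>" and "p \<equiv> softmax K \<theta>"
  shows "dg_flow K r \<eta> \<theta> a - dg_flow K r \<eta> \<theta> b
           = W a * (1 + p b - p a) - W b * (1 - p b + p a)
             + (p b - p a) * (\<Sum>c\<in>{1..K} - {a, b}. W c)"
proof -
  have split: "(\<Sum>c\<in>{1..K}. W c) = W a + W b + (\<Sum>c\<in>{1..K} - {a, b}. W c)"
    using assms(1-3)
    by (simp add: sum.remove[of _ a] sum.remove[of _ b] Diff_insert2 [symmetric] insert_commute)
  have "dg_flow K r \<eta> \<theta> a = W a - p a * (\<Sum>c\<in>{1..K}. W c)"
    unfolding W_def p_def by (rule dg_flow_eq[OF assms(1)])
  moreover have "dg_flow K r \<eta> \<theta> b = W b - p b * (\<Sum>c\<in>{1..K}. W c)"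
    unfolding W_def p_def by (rule dg_flow_eq[OF assms(2)])
  ultimately show ?thesis unfolding split by (simp add: algebra_simps)
qed

lemma abs_dg_weighted_advantage_le:
  assumes rewards: "\<forall>a\<in>{1..K}. 0 \<le> r a \<and> r a \<le> 1" and j: "j \<in> {1..K}"
  shows "\<bar>dg_weighted_advantage K r \<eta> \<theta> j\<bar> \<le> 1 - softmax K \<theta> j"
proof -
  have "0 < dg_gate K r \<eta> \<theta> j" "dg_gate K r \<eta> \<theta> j \<le> 1"
    unfolding dg_gate_def by (simp_all add: sigmoid_pos sigmoid_le_one)
  moreover have "0 < softmax K \<theta> j" using j by (simp add: softmax_pos)
  ultimately have
    "\<bar>dg_weighted_advantage K r \<eta> \<theta> j\<bar> \<le> softmax K \<theta> j * \<bar>advantage K r \<theta> j\<bar>"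
    unfolding dg_weighted_advantage_def by (simp add: abs_mult mult_left_le_one_le)
  also have "\<dots> \<le> 1 * (1 - softmax K \<theta> j)"
    using softmax_le_one[OF j] abs_advantage_le[OF rewards j] by (intro mult_mono) simp_all
  finally show ?thesis by simp
qed

lemma dg_weighted_advantage_ge_of_reward_gap:
  assumes rewards: "\<forall>a\<in>{1..K}. 0 \<le> r a \<and> r a \<le> 1"
    and b: "b \<in> {1..K}" and j: "j \<in> {1..K}" and \<eta>: "0 < \<eta>"
    and gap: "4 * (1 - softmax K \<theta> j) \<le> r b - r j"
  shows "3/8 * (r b - r j) * softmax K \<theta> b \<le> dg_weighted_advantage K r \<eta> \<theta> b"
proof -
  have "\<bar>advantage K r \<theta> j\<bar> \<le> 1 - softmax K \<theta> j" using rewards j by (rule abs_advantage_le)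
  moreover have "0 \<le> 1 - softmax K \<theta> j" using softmax_le_one[OF j] by simp
  ultimately have adv: "3/4 * (r b - r j) \<le> advantage K r \<theta> b" "0 \<le> advantage K r \<theta> b"
    using advantage_diff[of K r \<theta> b j] gap by (auto simp: abs_le_iff)
  have p: "0 < softmax K \<theta> b" using b by (simp add: softmax_pos)
  have "3/8 * (r b - r j) * softmax K \<theta> b \<le> 1/2 * (softmax K \<theta> b * advantage K r \<theta> b)"
    using mult_left_mono[OF adv(1) less_imp_le[OF p]] by simp
  also have "\<dots> \<le> dg_gate K r \<eta> \<theta> b * (softmax K \<theta> b * advantage K r \<theta> b)"
    using dg_gate_ge_half[OF \<eta> b adv(2)] p adv(2) by (intro mult_right_mono) simp_all
  finally show ?thesis unfolding dg_weighted_advantage_def by (simp add: mult.assoc)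
qed

lemma dg_weighted_advantage_ge_separated:
  assumes rewards: "\<forall>a\<in>{1..K}. 0 \<le> r a \<and> r a \<le> 1"
    and a: "a \<in> {1..K}" and j: "j \<in> {1..K}" and aj: "a \<noteq> j"
    and gap: "\<delta> \<le> \<bar>r a - r j\<bar>" and \<eta>: "0 < \<eta>"
    and small: "1 - softmax K \<theta> j < \<delta> / 2"
  shows "- ((1 - softmax K \<theta> j) powr (\<delta> / (2 * \<eta>))) * softmax K \<theta> a
           \<le> dg_weighted_advantage K r \<eta> \<theta> a"
proof (cases "0 \<le> advantage K r \<theta> a")
  case True
  have "0 < dg_gate K r \<eta> \<theta> a" "0 < softmax K \<theta> a"
    using a by (simp_all add: dg_gate_def sigmoid_pos softmax_pos)
  with True have "0 \<le> dg_weighted_advantage K r \<eta> \<theta> a"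
    unfolding dg_weighted_advantage_def by simp
  moreover have "0 \<le> (1 - softmax K \<theta> j) powr (\<delta> / (2 * \<eta>)) * softmax K \<theta> a"
    using \<open>0 < softmax K \<theta> a\<close> by simp
  ultimately show ?thesis by linarith
next
  case False
  let ?\<epsilon> = "1 - softmax K \<theta> j"
  have "advantage K r \<theta> a = r a - r j + advantage K r \<theta> j"
    using advantage_diff[of K r \<theta> a j] by simp
  moreover have "\<bar>advantage K r \<theta> j\<bar> \<le> ?\<epsilon>" using rewards j by (rule abs_advantage_le)
  \<comment> \<open>a negative advantage forces r a < r j, hence r a \<le> r j - \<delta>\<close>
  ultimately have adv: "advantage K r \<theta> a \<le> - (\<delta> / 2)"
    using False gap small by (auto simp: abs_if split: if_splits)
  have p_le: "softmax K \<theta> a \<le> ?\<epsilon>" using a j aj by (rule softmax_le_one_minus)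
  have p_pos: "0 < softmax K \<theta> a" using a by (simp add: softmax_pos)
  have gate: "dg_gate K r \<eta> \<theta> a \<le> ?\<epsilon> powr (\<delta> / (2 * \<eta>))"
    using dg_gate_le_powr[OF \<eta> a _ adv p_le] p_le p_pos small by simp
  have "0 < dg_gate K r \<eta> \<theta> a" by (simp add: dg_gate_def sigmoid_pos)
  then have "dg_gate K r \<eta> \<theta> a * softmax K \<theta> a * (-1) \<le> dg_weighted_advantage K r \<eta> \<theta> a"
    unfolding dg_weighted_advantage_def using advantage_ge_minus_one[OF rewards a] p_pos
    by (intro mult_left_mono) simp_all
  moreover have "dg_gate K r \<eta> \<theta> a * softmax K \<theta> a \<le> ?\<epsilon> powr (\<delta> / (2 * \<eta>)) * softmax K \<theta> a"
    using gate p_pos by simp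
  ultimately show ?thesis by simp
qed

lemma sum_dg_weighted_advantage_ge_separated:
  assumes rewards: "\<forall>a\<in>{1..K}. 0 \<le> r a \<and> r a \<le> 1" and j: "j \<in> {1..K}"
    and gap: "\<forall>a\<in>{1..K} - {j}. \<delta> \<le> \<bar>r a - r j\<bar>" and \<eta>: "0 < \<eta>"
    and small: "1 - softmax K \<theta> j < \<delta> / 2"
    and A: "A \<subseteq> {1..K} - {j}"
  shows "- ((1 - softmax K \<theta> j) powr (\<delta> / (2 * \<eta>))) * (1 - softmax K \<theta> j)
           \<le> (\<Sum>a\<in>A. dg_weighted_advantage K r \<eta> \<theta> a)"
proof -
  let ?c = "(1 - softmax K \<theta> j) powr (\<delta> / (2 * \<eta>))"
  have "(\<Sum>a\<in>A. softmax K \<theta> a) \<le> (\<Sum>a\<in>{1..K} - {j}. softmax K \<theta> a)"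
    using A j by (intro sum_mono2) (auto simp: less_imp_le softmax_pos)
  then have "(\<Sum>a\<in>A. softmax K \<theta> a) \<le> 1 - softmax K \<theta> j"
    using sum_softmax_remove[OF j, of \<theta>] by simp
  then have "- ?c * (1 - softmax K \<theta> j) \<le> - ?c * (\<Sum>a\<in>A. softmax K \<theta> a)"
    by (simp add: mult_left_mono)
  also have "\<dots> = (\<Sum>a\<in>A. - ?c * softmax K \<theta> a)" by (simp add: sum_distrib_left)
  also have "\<dots> \<le> (\<Sum>a\<in>A. dg_weighted_advantage K r \<eta> \<theta> a)"
    using A gap by (intro sum_mono dg_weighted_advantage_ge_separated[OF rewards _ j _ _ \<eta> small]) auto
  finally show ?thesis .
qed

lemma dg_flow_gap_ge:
  fixes r \<theta> :: "nat \<Rightarrow> real" and K j :: nat and \<eta> \<delta> :: real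
  defines "\<Delta> \<equiv> r 1 - r j" and "\<epsilon> \<equiv> 1 - softmax K \<theta> j"
  assumes rewards: "\<forall>a\<in>{1..K}. 0 \<le> r a \<and> r a \<le> 1" and j: "j \<in> {2..K}"
    and gap: "\<forall>a\<in>{1..K} - {j}. \<delta> \<le> \<bar>r a - r j\<bar>" and \<eta>: "0 < \<eta>"
    and \<epsilon>_pos: "0 < \<epsilon>" and \<epsilon>_le: "\<epsilon> \<le> \<Delta> / (16 * real K)" and \<epsilon>_gap: "\<epsilon> < \<delta> / 2"
    and gate_small: "\<epsilon> powr (\<delta> / (2 * \<eta>)) \<le> \<Delta> / (8 * real K)"
    and p1: "\<epsilon> / real K \<le> softmax K \<theta> 1"
  shows "\<Delta> / (8 * real K) * \<epsilon> \<le> dg_flow K r \<eta> \<theta> 1 - dg_flow K r \<eta> \<theta> j"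
proof -
  define p W where "p = softmax K \<theta>" and "W = dg_weighted_advantage K r \<eta> \<theta>"
  define B where "B = \<Delta> / (8 * real K) * \<epsilon>"
  have K: "1 \<le> real K" and one: "1 \<in> {1..K}" and jI: "j \<in> {1..K}" "1 \<noteq> j" using j by auto
  have "0 < \<Delta> / (16 * real K)" using \<epsilon>_pos \<epsilon>_le by linarith
  then have \<Delta>_pos: "0 < \<Delta>" using K by (simp add: zero_less_divide_iff)
  then have B_nonneg: "0 \<le> B" using \<epsilon>_pos unfolding B_def by simp
  have "r 1 \<le> 1" "0 \<le> r j" using rewards one jI(1) by auto
  then have "\<Delta> \<le> 1" unfolding \<Delta>_def by simp
  have "\<Delta> / (16 * real K) \<le> \<Delta> / 4" using \<Delta>_pos K by (intro divide_left_mono) auto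
  then have \<epsilon>_small: "4 * \<epsilon> \<le> \<Delta>" "\<epsilon> \<le> 1 / 2" using \<epsilon>_le \<open>\<Delta> \<le> 1\<close> by linarith+
  have p1_le: "p 1 \<le> \<epsilon>" unfolding p_def \<epsilon>_def using one jI by (rule softmax_le_one_minus)
  have p_diff: "0 \<le> p j - p 1" "p j - p 1 \<le> 1"
    using p1_le \<epsilon>_small softmax_pos[of K \<theta> 1] softmax_le_one[OF jI(1), of \<theta>] j
    unfolding \<epsilon>_def p_def by auto
  have best_term: "3 * B \<le> W 1 * (1 + p j - p 1)"
  proof -
    have "3 * B \<le> 3/8 * \<Delta> * p 1"
      using mult_left_mono[OF p1, of "3/8 * \<Delta>"] \<Delta>_pos unfolding B_def p_def by simp
    also have "\<dots> \<le> W 1"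
      using dg_weighted_advantage_ge_of_reward_gap[OF rewards one jI(1) \<eta>] \<epsilon>_small
      unfolding W_def p_def \<Delta>_def \<epsilon>_def by simp
    finally have "3 * B \<le> W 1" .
    moreover have "W 1 \<le> W 1 * (1 + p j - p 1)"
      using calculation B_nonneg p_diff mult_left_mono[of 1 "1 + p j - p 1" "W 1"] by simp
    ultimately show ?thesis by linarith
  qed
  have j_term: "W j * (1 - p j + p 1) \<le> B"
  proof -
    have "\<bar>W j * (1 - p j + p 1)\<bar> \<le> \<epsilon> * (2 * \<epsilon>)"
      unfolding abs_mult W_def using abs_dg_weighted_advantage_le[OF rewards jI(1)] p1_le p_diff
      unfolding \<epsilon>_def p_def by (intro mult_mono) auto
    also have "\<dots> \<le> B" using \<epsilon>_le \<epsilon>_pos K unfolding B_def by (simp add: field_simps)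
    finally show ?thesis by simp
  qed
  have rest_term: "- B \<le> (p j - p 1) * (\<Sum>c\<in>{1..K} - {1, j}. W c)"
  proof -
    have "- (\<epsilon> powr (\<delta> / (2 * \<eta>))) * \<epsilon> \<le> (\<Sum>c\<in>{1..K} - {1, j}. W c)"
      using \<epsilon>_gap unfolding W_def \<epsilon>_def
      by (intro sum_dg_weighted_advantage_ge_separated[OF rewards jI(1) gap \<eta>]) auto
    moreover have "\<epsilon> powr (\<delta> / (2 * \<eta>)) * \<epsilon> \<le> B"
      unfolding B_def using \<epsilon>_pos by (intro mult_right_mono[OF gate_small]) simp
    ultimately have "(p j - p 1) * - B \<le> (p j - p 1) * (\<Sum>c\<in>{1..K} - {1, j}. W c)"
      using p_diff(1) by (intro mult_left_mono) auto
    moreover have "- B \<le> (p j - p 1) * - B" using p_diff B_nonneg by (simp add: mult_left_le_one_le)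
    ultimately show ?thesis by linarith
  qed
  have "dg_flow K r \<eta> \<theta> 1 - dg_flow K r \<eta> \<theta> j
          = W 1 * (1 + p j - p 1) - W j * (1 - p j + p 1) + (p j - p 1) * (\<Sum>c\<in>{1..K} - {1, j}. W c)"
    unfolding W_def p_def by (rule dg_flow_diff_eq[OF one jI])
  with best_term j_term rest_term show ?thesis unfolding B_def by linarith
qed

lemma strictly_decreasing_neq:
  fixes r :: "nat \<Rightarrow> 'b::linorder" and a b :: nat
  assumes "\<forall>a b. 1 \<le> a \<longrightarrow> a < b \<longrightarrow> b \<le> K \<longrightarrow> r a > r b"
    and "a \<in> {1..K}" "b \<in> {1..K}" "a \<noteq> b"
  shows "r a \<noteq> r b"
  using assms(1)[rule_format, of a b] assms(1)[rule_format, of b a] assms(2-4)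
  by (cases a b rule: linorder_cases) auto

lemma ex_pos_separation:
  fixes f :: "'a \<Rightarrow> real"
  assumes "finite A" and "\<forall>a\<in>A - {j}. f a \<noteq> f j"
  shows "\<exists>\<delta>>0. \<forall>a\<in>A - {j}. \<delta> \<le> \<bar>f a - f j\<bar>"
proof (cases "A - {j} = {}")
  case True
  then show ?thesis by (intro exI[of _ 1]) auto
next
  case False
  let ?\<delta> = "Min ((\<lambda>a. \<bar>f a - f j\<bar>) ` (A - {j}))"
  have "0 < ?\<delta>" using False assms by (subst Min_gr_iff) auto
  moreover have "\<forall>a\<in>A - {j}. ?\<delta> \<le> \<bar>f a - f j\<bar>" using assms(1) by (auto intro: Min_le)
  ultimately show ?thesis by blast
qed

theorem theorem2:
  fixes K :: nat and r :: "nat \<Rightarrow> real" and j :: nat and \<eta> :: real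
  assumes "K \<ge> 2"
    and "\<forall>a\<in>{1..K}. 0 \<le> r a \<and> r a \<le> 1"
    and "\<forall>a b. 1 \<le> a \<longrightarrow> a < b \<longrightarrow> b \<le> K \<longrightarrow> r a > r b"
    and "j \<in> {2..K}"
    and "\<eta> > 0"
  shows "\<exists>\<epsilon>0 > 0. \<forall>\<theta> :: nat \<Rightarrow> real.
           let \<epsilon> = 1 - softmax K \<theta> j in
           0 < \<epsilon> \<longrightarrow> \<epsilon> < \<epsilon>0 \<longrightarrow> softmax K \<theta> 1 \<ge> \<epsilon> / real K \<longrightarrow>
           dg_flow K r \<eta> \<theta> 1 - dg_flow K r \<eta> \<theta> j \<ge> (r 1 - r j) / (8 * real K) * \<epsilon>"
proof -
  define \<Delta> where "\<Delta> = r 1 - r j"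
  have best: "0 < \<Delta>" using assms(3,4) unfolding \<Delta>_def by auto
  have "\<forall>a\<in>{1..K} - {j}. r a \<noteq> r j"
    using strictly_decreasing_neq[OF assms(3)] assms(4) by auto
  then obtain \<delta> where \<delta>: "0 < \<delta>" "\<forall>a\<in>{1..K} - {j}. \<delta> \<le> \<bar>r a - r j\<bar>"
    using ex_pos_separation[of "{1..K}"] by blast
  define \<epsilon>0
    where "\<epsilon>0 = min (\<Delta> / (16 * real K)) (min (\<delta> / 2) ((\<Delta> / (8 * real K)) powr (2 * \<eta> / \<delta>)))"
  have "0 < \<epsilon>0" using best \<delta>(1) assms(1) unfolding \<epsilon>0_def by simp
  moreover have "\<Delta> / (8 * real K) * \<epsilon> \<le> dg_flow K r \<eta> \<theta> 1 - dg_flow K r \<eta> \<theta> j"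
    if \<epsilon>: "\<epsilon> = 1 - softmax K \<theta> j" "0 < \<epsilon>" "\<epsilon> < \<epsilon>0" "\<epsilon> / real K \<le> softmax K \<theta> 1" for \<theta> \<epsilon>
  proof -
    have "\<epsilon> powr (\<delta> / (2 * \<eta>)) \<le> ((\<Delta> / (8 * real K)) powr (2 * \<eta> / \<delta>)) powr (\<delta> / (2 * \<eta>))"
      using \<epsilon> \<delta>(1) assms(5) unfolding \<epsilon>0_def by (intro powr_mono2) auto
    also have "\<dots> = \<Delta> / (8 * real K)"
      using best \<delta>(1) assms(5) by (simp add: powr_powr)
    finally show ?thesis
      using dg_flow_gap_ge[OF assms(2,4) \<delta>(2) assms(5)] \<epsilon> unfolding \<epsilon>0_def \<Delta>_def by auto
  qed
  ultimately show ?thesis unfolding Let_def \<Delta>_def by blast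
qed

end
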